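(* Let $(P,\mathit{dist})$ be a finite metric space of doubling dimension $d$, let $\delta$ be the closest-pair distance of $P$, let $S\subseteq P$ with $n=|S|\ge 2$, and let $\delta_0$ be the output of Algorithm $\mathrm{ClosestPair}(S,n,d)$ (for any outcome of its random choices). Then (1) $\delta_0\ge\delta$, and (2) if $\delta(S)=\delta$, then $\delta_0=\delta$.
   Context: For $X\subseteq P$, $p\in P$ and reals $R'\ge R\ge 0$: $\mathit{ball}_X(p,R)=\{x\in X:\mathit{dist}(p,x)\le R\}$ and $\mathit{annulus}_X(p,R,R')=\{x\in X: R<\mathit{dist}(p,x)\le R'\}$. For $X\subseteq P$, $\delta(X)=\infty$ if $|X|\le1$ and $\delta(X)=\min\{\mathit{dist}(x,y):x,y\in X,x\ne y\}$ otherwise; $\delta=\delta(P)$. The doubling dimension of $(P,\mathit{dist})$ is $\log_2\lambda$, where $\lambda$ is the smallest integer such that for every $p\in P$ and real $R>0$, $\mathit{ball}_P(p,R)$ is covered by at most $\lambda$ balls $\mathit{ball}_P(q,R/2)$ with $q\in P$; throughout, $d$ denotes the doubling dimension of the whole space $P$. Algorithm $\mathrm{SepAnn}(S,n,d,\mu,c)$: repeat: choose $p$ uniformly at random from $S$; let $R_p=\min\{r>0:|\mathit{ball}_S(p,r)|\ge n/c\}$; until $|\mathit{ball}_S(p,\mu R_p)|\le n/2$; return $p$ and $R'=R_p$. Algorithm $\mathrm{SparseSepAnn}(S,n,d,t)$: set $c=2(4e)^d$; let $(p,R')$ be the output of $\mathrm{SepAnn}(S,n,d,e,c)$; let $R_i=(1+1/t)^iR'$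 ($0\le i\le t$) and $A_i=\mathit{annulus}_S(p,R_{i-1},R_i)$ ($1\le i\le t$); repeat: choose $i$ uniformly at random from $\{1,\dots,t\}$; until $|A_i|\le n/t$; return $p$ and $R=R_{i-1}$. Algorithm $\mathrm{ClosestPair}(S,n,d)$ (for $S\subseteq P$, $n=|S|\ge2$): if $n<2(16e)^d$, compute $\delta_0=\delta(S)$ by brute force. Otherwise: set $t=\lfloor \frac{1}{16e}(n/2)^{1/d}\rfloor$; let $(p,R)$ be the output of $\mathrm{SparseSepAnn}(S,n,d,t)$; let $S_1=\mathit{ball}_S(p,R)$, $S_2=\mathit{annulus}_S(p,R,(1+1/t)R)$, $S_3=S\setminus(S_1\cup S_2)$; compute $\delta'=\mathrm{ClosestPair}(S_1\cup S_2,|S_1\cup S_2|,d)$ and $\delta''=\mathrm{ClosestPair}(S_2\cup S_3,|S_2\cup S_3|,d)$; set $\delta_0=\min(\delta',\delta'')$. Return $\delta_0$. *)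

theory Defs
  imports Complex_Main "HOL-Library.Extended_Real"
begin

definition metric_on :: "'a set \<Rightarrow> ('a \<Rightarrow> 'a \<Rightarrow> real) \<Rightarrow> bool" where
  "metric_on P dst \<longleftrightarrow>
     (\<forall>x\<in>P. \<forall>y\<in>P. dst x y \<ge> 0 \<and> (dst x y = 0 \<longleftrightarrow> x = y) \<and> dst x y = dst y x) \<and>
     (\<forall>x\<in>P. \<forall>y\<in>P. \<forall>z\<in>P. dst x z \<le> dst x y + dst y z)"

definition mball :: "('a \<Rightarrow> 'a \<Rightarrow> real) \<Rightarrow> 'a set \<Rightarrow> 'a \<Rightarrow> real \<Rightarrow> 'a set" where
  "mball dst X p R = {x \<in> X. dst p x \<le> R}"

definition annulus :: "('a \<Rightarrow> 'a \<Rightarrow> real) \<Rightarrow> 'a set \<Rightarrow> 'a \<Rightarrow> real \<Rightarrow> real \<Rightarrow> 'a set" where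
  "annulus dst X p R R' = {x \<in> X. R < dst p x \<and> dst p x \<le> R'}"

definition cp_delta :: "('a \<Rightarrow> 'a \<Rightarrow> real) \<Rightarrow> 'a set \<Rightarrow> ereal" where
  "cp_delta dst X = (if card X \<le> 1 then \<infinity>
      else ereal (Min {dst x y | x y. x \<in> X \<and> y \<in> X \<and> x \<noteq> y}))"

definition doubling_const :: "'a set \<Rightarrow> ('a \<Rightarrow> 'a \<Rightarrow> real) \<Rightarrow> nat" where
  "doubling_const P dst = (LEAST lam::nat. \<forall>p\<in>P. \<forall>R>0. \<exists>C. C \<subseteq> P \<and> finite C \<and> card C \<le> lam \<and>
        mball dst P p R \<subseteq> (\<Union>q\<in>C. mball dst P q (R/2)))"

definition doubling_dim :: "'a set \<Rightarrow> ('a \<Rightarrow> 'a \<Rightarrow> real) \<Rightarrow> real" where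
  "doubling_dim P dst = log 2 (real (doubling_const P dst))"

text \<open>All possible outputs of SepAnn(S,n,d,mu,c) (the repeat loop stops at a
  uniformly random p satisfying the exit condition; any such p is a possible outcome).\<close>
definition sep_ann_R :: "('a \<Rightarrow> 'a \<Rightarrow> real) \<Rightarrow> 'a set \<Rightarrow> nat \<Rightarrow> real \<Rightarrow> 'a \<Rightarrow> real" where
  "sep_ann_R dst S n c p = (LEAST r::real. r > 0 \<and> real (card (mball dst S p r)) \<ge> real n / c)"

definition sep_ann_out :: "('a \<Rightarrow> 'a \<Rightarrow> real) \<Rightarrow> 'a set \<Rightarrow> nat \<Rightarrow> real \<Rightarrow> real \<Rightarrow> real \<Rightarrow> ('a \<times> real) set" where
  "sep_ann_out dst S n d mu c =
     {(p, R'). p \<in> S \<and> R' = sep_ann_R dst S n c p \<and>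
               real (card (mball dst S p (mu * R'))) \<le> real n / 2}"

definition sparse_sep_ann_out :: "('a \<Rightarrow> 'a \<Rightarrow> real) \<Rightarrow> 'a set \<Rightarrow> nat \<Rightarrow> real \<Rightarrow> nat \<Rightarrow> ('a \<times> real) set" where
  "sparse_sep_ann_out dst S n d t =
     (let c = 2 * (4 * exp 1) powr d in
      {(p, R). \<exists>R'. (p, R') \<in> sep_ann_out dst S n d (exp 1) c \<and>
         (\<exists>i\<in>{1..t}.
            real (card (annulus dst S p ((1 + 1 / real t) ^ (i - 1) * R') ((1 + 1 / real t) ^ i * R')))
              \<le> real n / real t
            \<and> R = (1 + 1 / real t) ^ (i - 1) * R')})"

text \<open>closest_pair_out dst d S delta0: delta0 is a possible output of ClosestPair(S,|S|,d).\<close>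
inductive closest_pair_out :: "('a \<Rightarrow> 'a \<Rightarrow> real) \<Rightarrow> real \<Rightarrow> 'a set \<Rightarrow> ereal \<Rightarrow> bool"
  for dst :: "'a \<Rightarrow> 'a \<Rightarrow> real" and d :: real where
  base: "real (card S) < 2 * (16 * exp 1) powr d \<Longrightarrow> closest_pair_out dst d S (cp_delta dst S)"
| step: "\<lbrakk> \<not> (real (card S) < 2 * (16 * exp 1) powr d);
           t = nat \<lfloor>(1 / (16 * exp 1)) * (real (card S) / 2) powr (1 / d)\<rfloor>;
           (p, R) \<in> sparse_sep_ann_out dst S (card S) d t;
           S1 = mball dst S p R;
           S2 = annulus dst S p R ((1 + 1 / real t) * R);
           S3 = S - (S1 \<union> S2);
           closest_pair_out dst d (S1 \<union> S2) d';
           closest_pair_out dst d (S2 \<union> S3) d'' \<rbrakk>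
         \<Longrightarrow> closest_pair_out dst d S (min d' d'')"

end

theory Submission
  imports Defs
begin

(*
  ClosestPair in fact returns delta(S) exactly; both claims follow because delta(P) <= delta(S).
  A recursive step recurses on S1 u S2 and on S2 u S3, so it cannot separate a pair of S closer
  than the width R/t of the annulus S2, and it suffices to show R >= delta(S) t.  The ball of
  radius R' <= R found by SepAnn holds at least n/c points of S, which are delta(S)-separated; in
  a space of doubling dimension d the packing bound allows at most (4 R' / delta(S))^d of them,
  whereas the choice of t makes (4 t)^d <= n/c.
*)

lemma metric_on_subset: "metric_on P dst \<Longrightarrow> S \<subseteq> P \<Longrightarrow> metric_on S dst"
  unfolding metric_on_def by blast

lemma metric_on_dist_self: "metric_on P dst \<Longrightarrow> x \<in> P \<Longrightarrow> dst x x = 0"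
  unfolding metric_on_def by blast

lemma one_less_card_iff_pair: "finite X \<Longrightarrow> 1 < card X \<longleftrightarrow> (\<exists>x\<in>X. \<exists>y\<in>X. x \<noteq> y)"
  using card_le_Suc0_iff_eq[of X] by (auto simp: not_le[symmetric])

lemma metric_on_dist_pos:
  "metric_on P dst \<Longrightarrow> x \<in> P \<Longrightarrow> y \<in> P \<Longrightarrow> x \<noteq> y \<Longrightarrow> 0 < dst x y"
  unfolding metric_on_def by (metis order_le_less)

lemma finite_pair_distances: "finite X \<Longrightarrow> finite {dst x y | x y. x \<in> X \<and> y \<in> X \<and> x \<noteq> y}"
  by (rule finite_subset[of _ "case_prod dst ` (X \<times> X)"]) auto

lemma cp_delta_le_dist:
  assumes "finite X" "x \<in> X" "y \<in> X" "x \<noteq> y"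
  shows "cp_delta dst X \<le> ereal (dst x y)"
proof -
  have "1 < card X"
    using assms one_less_card_iff_pair by blast
  moreover have "Min {dst x y | x y. x \<in> X \<and> y \<in> X \<and> x \<noteq> y} \<le> dst x y"
    using finite_pair_distances[OF assms(1)] assms by (intro Min_le) auto
  ultimately show ?thesis unfolding cp_delta_def by auto
qed

lemma cp_delta_attained:
  assumes "finite X" "1 < card X"
  shows "\<exists>x\<in>X. \<exists>y\<in>X. x \<noteq> y \<and> cp_delta dst X = ereal (dst x y)"
proof -
  let ?D = "{dst x y | x y. x \<in> X \<and> y \<in> X \<and> x \<noteq> y}"
  have "?D \<noteq> {}"
    using assms one_less_card_iff_pair by blast
  then have "Min ?D \<in> ?D"
    using finite_pair_distances[OF assms(1)] by (rule Min_in[rotated])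
  then show ?thesis
    using assms(2) unfolding cp_delta_def by auto
qed

lemma cp_delta_antimono:
  assumes "finite Y" "X \<subseteq> Y"
  shows "cp_delta dst Y \<le> cp_delta dst X"
proof (cases "1 < card X")
  case True
  then obtain x y where "x \<in> X" "y \<in> X" "x \<noteq> y" "cp_delta dst X = ereal (dst x y)"
    using cp_delta_attained[OF finite_subset[OF assms(2,1)]] by blast
  with assms show ?thesis
    using cp_delta_le_dist[OF assms(1), of x y dst] by auto
next
  case False
  then show ?thesis
    unfolding cp_delta_def by simp
qed

lemma cp_delta_eq_if_contains_closest_pair:
  assumes "finite Y" "X \<subseteq> Y" "x \<in> X" "y \<in> X" "x \<noteq> y" "cp_delta dst Y = ereal (dst x y)"
  shows "cp_delta dst X = cp_delta dst Y"
proof (rule order_antisym)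
  show "cp_delta dst X \<le> cp_delta dst Y"
    using cp_delta_le_dist[OF finite_subset[OF assms(2,1)] assms(3-5)] assms(6) by simp
qed (rule cp_delta_antimono[OF assms(1,2)])

lemma closest_pair_exists:
  assumes "finite X" "metric_on X dst" "1 < card X"
  obtains x y where "x \<in> X" "y \<in> X" "x \<noteq> y" "0 < dst x y" "cp_delta dst X = ereal (dst x y)"
    "\<forall>a\<in>X. \<forall>b\<in>X. a \<noteq> b \<longrightarrow> dst x y \<le> dst a b"
proof -
  obtain x y where xy: "x \<in> X" "y \<in> X" "x \<noteq> y" "cp_delta dst X = ereal (dst x y)"
    using cp_delta_attained[OF assms(1,3)] by blast
  moreover have "0 < dst x y"
    using metric_on_dist_pos[OF assms(2) xy(1-3)] .
  moreover have "\<forall>a\<in>X. \<forall>b\<in>X. a \<noteq> b \<longrightarrow> dst x y \<le> dst a b"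
    using cp_delta_le_dist[OF assms(1), of _ _ dst] xy(4) by simp
  ultimately show ?thesis using that by blast
qed

lemma doubling_const_cover:
  assumes "finite P" "metric_on P dst" "p \<in> P" "R > 0"
  shows "\<exists>C \<subseteq> P. finite C \<and> card C \<le> doubling_const P dst \<and>
           mball dst P p R \<subseteq> (\<Union>q\<in>C. mball dst P q (R / 2))"
proof -
  let ?covers = "\<lambda>lam. \<forall>p\<in>P. \<forall>R>0. \<exists>C. C \<subseteq> P \<and> finite C \<and> card C \<le> lam \<and>
        mball dst P p R \<subseteq> (\<Union>q\<in>C. mball dst P q (R / 2))"
  have "mball dst P p' R' \<subseteq> (\<Union>q\<in>P. mball dst P q (R' / 2))" if "R' > 0" for p' R'
    using that metric_on_dist_self[OF assms(2)] unfolding mball_def by force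
  then have "?covers (card P)"
    using assms(1) by blast
  then have "?covers (doubling_const P dst)"
    unfolding doubling_const_def by (rule LeastI)
  then show ?thesis
    using assms(3,4) by blast
qed

lemma doubling_const_cover_pow:
  assumes "finite P" "metric_on P dst" "p \<in> P" "R > 0"
  shows "\<exists>C \<subseteq> P. finite C \<and> card C \<le> doubling_const P dst ^ k \<and>
           mball dst P p R \<subseteq> (\<Union>q\<in>C. mball dst P q (R / 2 ^ k))"
  using assms(3,4)
proof (induction k arbitrary: p R)
  case 0
  then show ?case
    using assms(1) by (intro exI[of _ "{p}"]) auto
next
  case (Suc k)
  let ?lam = "doubling_const P dst"
  obtain C where C: "C \<subseteq> P" "finite C" "card C \<le> ?lam"
    "mball dst P p R \<subseteq> (\<Union>q\<in>C. mball dst P q (R / 2))"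
    using doubling_const_cover[OF assms(1,2) Suc.prems] by blast
  have "\<exists>D \<subseteq> P. finite D \<and> card D \<le> ?lam ^ k \<and>
          mball dst P q (R / 2) \<subseteq> (\<Union>e\<in>D. mball dst P e (R / 2 ^ Suc k))" if "q \<in> C" for q
    using Suc.IH[of q "R / 2"] C(1) Suc.prems(2) that by (simp add: subset_iff)
  then obtain F where F: "\<And>q. q \<in> C \<Longrightarrow> F q \<subseteq> P \<and> finite (F q) \<and> card (F q) \<le> ?lam ^ k \<and>
          mball dst P q (R / 2) \<subseteq> (\<Union>e\<in>F q. mball dst P e (R / 2 ^ Suc k))"
    by metis
  have "card (\<Union>q\<in>C. F q) \<le> (\<Sum>q\<in>C. card (F q))"
    by (rule card_UN_le[OF C(2)])
  also have "\<dots> \<le> card C * ?lam ^ k"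
    using F sum_bounded_above[of C "\<lambda>q. card (F q)" "?lam ^ k"] by auto
  also have "\<dots> \<le> ?lam ^ Suc k"
    using C(3) by simp
  finally have "card (\<Union>q\<in>C. F q) \<le> ?lam ^ Suc k" .
  moreover have "mball dst P p R \<subseteq> (\<Union>e\<in>(\<Union>q\<in>C. F q). mball dst P e (R / 2 ^ Suc k))"
  proof
    fix x assume "x \<in> mball dst P p R"
    then obtain q where "q \<in> C" "x \<in> mball dst P q (R / 2)"
      using C(4) by blast
    then obtain e where "e \<in> F q" "x \<in> mball dst P e (R / 2 ^ Suc k)"
      using F[of q] by blast
    then show "x \<in> (\<Union>e\<in>(\<Union>q\<in>C. F q). mball dst P e (R / 2 ^ Suc k))"
      using \<open>q \<in> C\<close> by blast
  qed
  moreover have "(\<Union>q\<in>C. F q) \<subseteq> P" "finite (\<Union>q\<in>C. F q)"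
    using C(2) F by auto
  ultimately show ?case
    by blast
qed

lemma card_separated_mball_le_doubling_pow:
  assumes "finite P" "metric_on P dst" "X \<subseteq> P" "q \<in> P" "r > 0"
    and sep: "\<forall>x\<in>X. \<forall>y\<in>X. x \<noteq> y \<longrightarrow> \<delta> \<le> dst x y"
    and small: "2 * r / 2 ^ k < \<delta>"
  shows "card (mball dst X q r) \<le> doubling_const P dst ^ k"
proof -
  let ?B = "\<lambda>c. X \<inter> mball dst P c (r / 2 ^ k)"
  obtain C where C: "C \<subseteq> P" "finite C" "card C \<le> doubling_const P dst ^ k"
    "mball dst P q r \<subseteq> (\<Union>c\<in>C. mball dst P c (r / 2 ^ k))"
    using doubling_const_cover_pow[OF assms(1,2,4,5), of k] by meson
  have fin: "finite (?B c)" for c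
    using assms(1,3) finite_subset by blast
  have single: "card (?B c) \<le> 1" if "c \<in> P" for c
  proof -
    have "x = y" if "x \<in> ?B c" "y \<in> ?B c" for x y
    proof (rule ccontr)
      assume "x \<noteq> y"
      have "x \<in> P" "y \<in> P" "dst c x \<le> r / 2 ^ k" "dst c y \<le> r / 2 ^ k"
        using that assms(3) unfolding mball_def by auto
      then have "dst x y \<le> 2 * r / 2 ^ k"
        using assms(2) \<open>c \<in> P\<close> unfolding metric_on_def by fastforce
      moreover have "\<delta> \<le> dst x y"
        using sep that \<open>x \<noteq> y\<close> by blast
      ultimately show False
        using small by linarith
    qed
    then show ?thesis
      using card_le_Suc0_iff_eq[OF fin] by simp
  qed
  have "mball dst X q r \<subseteq> (\<Union>c\<in>C. ?B c)"
    using C(4) assms(3) unfolding mball_def by blast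
  then have "card (mball dst X q r) \<le> card (\<Union>c\<in>C. ?B c)"
    using C(2) fin by (intro card_mono finite_UN_I) auto
  also have "\<dots> \<le> (\<Sum>c\<in>C. card (?B c))"
    by (rule card_UN_le[OF C(2)])
  also have "\<dots> \<le> card C"
    using single C(1) sum_bounded_above[of C "\<lambda>c. card (?B c)" 1] by auto
  finally show ?thesis
    using C(3) by simp
qed

lemma doubling_const_pos:
  assumes "finite P" "metric_on P dst" "p \<in> P"
  shows "0 < doubling_const P dst"
proof -
  obtain C where C: "finite C" "card C \<le> doubling_const P dst"
    "mball dst P p 1 \<subseteq> (\<Union>q\<in>C. mball dst P q (1 / 2))"
    using doubling_const_cover[OF assms, of 1] by auto
  have "p \<in> mball dst P p 1"
    using assms(3) metric_on_dist_self[OF assms(2,3)] unfolding mball_def by simp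
  then have "C \<noteq> {}"
    using C(3) by blast
  then show ?thesis
    using C(1,2) card_gt_0_iff by fastforce
qed

lemma ex_two_power_bracket:
  fixes x :: real
  assumes "1 \<le> x"
  shows "\<exists>k. 2 ^ k \<le> x \<and> x < 2 ^ Suc k"
proof -
  define k where "k = nat \<lfloor>log 2 x\<rfloor>"
  have "\<lfloor>log 2 x\<rfloor> = int k"
    using assms unfolding k_def by simp
  then have "2 powr real k \<le> x \<and> x < 2 powr (real k + 1)"
    using assms floor_log_eq_powr_iff[of x 2 "int k"] by simp
  then show ?thesis
    by (intro exI[of _ k]) (simp add: powr_add powr_realpow mult.commute)
qed

lemma card_separated_mball_le_powr:
  assumes "finite P" "metric_on P dst" "X \<subseteq> P" "q \<in> P" "r > 0" "\<delta> > 0"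
    and sep: "\<forall>x\<in>X. \<forall>y\<in>X. x \<noteq> y \<longrightarrow> \<delta> \<le> dst x y"
  shows "real (card (mball dst X q r)) \<le> max 1 ((4 * r / \<delta>) powr doubling_dim P dst)"
proof (cases "2 * r / \<delta> < 1")
  case True
  then have "card (mball dst X q r) \<le> doubling_const P dst ^ 0"
    using assms by (intro card_separated_mball_le_doubling_pow) (auto simp: field_simps)
  then show ?thesis
    by simp
next
  case False
  let ?lam = "doubling_const P dst" and ?d = "doubling_dim P dst"
  obtain k where k: "2 ^ k \<le> 2 * r / \<delta>" "2 * r / \<delta> < 2 ^ Suc k"
    using ex_two_power_bracket False by (meson not_less)
  have lam_pos: "0 < ?lam"
    using doubling_const_pos[OF assms(1,2,4)] .
  have "card (mball dst X q r) \<le> ?lam ^ Suc k"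
    using assms k(2) by (intro card_separated_mball_le_doubling_pow) (auto simp: field_simps)
  then have "real (card (mball dst X q r)) \<le> real ?lam ^ Suc k"
    by (metis of_nat_le_iff of_nat_power)
  also have "\<dots> = (2 powr ?d) ^ Suc k"
    using lam_pos unfolding doubling_dim_def by simp
  also have "\<dots> = (2 ^ Suc k) powr ?d"
    by (simp add: powr_power powr_realpow[symmetric] powr_powr mult.commute del: power_Suc)
  also have "\<dots> \<le> (4 * r / \<delta>) powr ?d"
  proof (rule powr_mono2)
    show "0 \<le> ?d"
      using lam_pos unfolding doubling_dim_def by simp
    show "2 ^ Suc k \<le> 4 * r / \<delta>"
      using k(1) by simp
  qed simp
  finally show ?thesis
    by simp
qed

lemma doubling_dim_pos:
  assumes "finite P" "metric_on P dst" "1 < card P"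
  shows "0 < doubling_dim P dst"
proof -
  obtain a b where ab: "a \<in> P" "b \<in> P" "a \<noteq> b" "0 < dst a b"
    and sep: "\<forall>x\<in>P. \<forall>y\<in>P. x \<noteq> y \<longrightarrow> dst a b \<le> dst x y"
    using closest_pair_exists[OF assms] by metis
  let ?lam = "doubling_const P dst"
  have "?lam \<noteq> 1"
  proof
    assume "?lam = 1"
    then have "real (card (mball dst P a (dst a b))) \<le> max 1 ((4 * dst a b / dst a b) powr 0)"
      using card_separated_mball_le_powr[OF assms(1,2) order_refl ab(1,4,4) sep]
      by (simp add: doubling_dim_def)
    then have "card (mball dst P a (dst a b)) \<le> 1"
      by simp
    moreover have "{a, b} \<subseteq> mball dst P a (dst a b)"
      using ab metric_on_dist_self[OF assms(2)] by (simp add: mball_def)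
    then have "2 \<le> card (mball dst P a (dst a b))"
      using ab(3) assms(1) card_mono[of "mball dst P a (dst a b)" "{a, b}"] by (simp add: mball_def)
    ultimately show False
      by simp
  qed
  then have "2 \<le> ?lam"
    using doubling_const_pos[OF assms(1,2) ab(1)] by linarith
  then show ?thesis
    unfolding doubling_dim_def by simp
qed

lemma sep_ann_R_pos_card_mball:
  assumes "finite S" "metric_on S dst" "p \<in> S" "1 < real n / c" "real n / c \<le> real (card S)"
  shows "0 < sep_ann_R dst S n c p \<and> real n / c \<le> real (card (mball dst S p (sep_ann_R dst S n c p)))"
proof -
  let ?ok = "\<lambda>r. 0 < r \<and> real n / c \<le> real (card (mball dst S p r))"
  \<comment> \<open>The least admissible radius exists because every admissible radius can be shrunk
      to the largest distance from \<open>p\<close> inside its ball, and there are finitely many distances.\<close>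
  have shrink: "\<exists>r'\<in>dst p ` S. ?ok r' \<and> r' \<le> r" if "?ok r" for r
  proof -
    let ?B = "mball dst S p r"
    have finB: "finite ?B"
      using assms(1) by (simp add: mball_def)
    have "1 < card ?B"
      using that assms(4) by linarith
    then obtain x where x: "x \<in> ?B" "x \<noteq> p"
      using card_le_Suc0_iff_eq[OF finB] by (metis One_nat_def not_le)
    define r' where "r' = Max (dst p ` ?B)"
    have r'_ge: "dst p z \<le> r'" if "z \<in> ?B" for z
      using finB that unfolding r'_def by simp
    have "r' \<in> dst p ` ?B"
      unfolding r'_def using finB x(1) by (intro Max_in) auto
    then have r'_le: "r' \<le> r" and r'_dist: "r' \<in> dst p ` S"
      by (auto simp: mball_def)
    have "mball dst S p r' = ?B"
      using r'_ge r'_le by (auto simp: mball_def)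
    moreover have "0 < dst p x"
      using metric_on_dist_pos[OF assms(2,3)] x by (simp add: mball_def)
    then have "0 < r'"
      using r'_ge[OF x(1)] by linarith
    ultimately show ?thesis
      using that r'_le r'_dist by auto
  qed
  let ?D = "{r \<in> dst p ` S. ?ok r}"
  have Max_ge: "dst p x \<le> Max (dst p ` S)" if "x \<in> S" for x
    using assms(1) that by simp
  then have "mball dst S p (Max (dst p ` S) + 1) = S"
    by (fastforce simp: mball_def)
  moreover have "0 \<le> Max (dst p ` S)"
    using Max_ge[OF assms(3)] metric_on_dist_self[OF assms(2,3)] by simp
  ultimately have "?ok (Max (dst p ` S) + 1)"
    using assms(5) by simp
  then have "?D \<noteq> {}"
    using shrink by blast
  moreover have "finite ?D"
    using assms(1) by simp
  ultimately have "Min ?D \<in> ?D"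
    by (rule Min_in[rotated])
  then have min: "?ok (Min ?D)" "\<And>r. ?ok r \<Longrightarrow> Min ?D \<le> r"
    using shrink Min_le[OF \<open>finite ?D\<close>] by (blast, fastforce)
  then have "sep_ann_R dst S n c p = Min ?D"
    unfolding sep_ann_R_def by (intro Least_equality) auto
  then show ?thesis
    using min(1) by simp
qed

lemma sep_ann_radius_lower_bound:
  assumes "finite P" "metric_on P dst" "S \<subseteq> P" "d = doubling_dim P dst" "0 < d" "0 < \<delta>"
    and sep: "\<forall>x\<in>S. \<forall>y\<in>S. x \<noteq> y \<longrightarrow> \<delta> \<le> dst x y"
    and large: "2 * (16 * exp 1) powr d \<le> real (card S)"
    and t: "real t \<le> (1 / (16 * exp 1)) * (real (card S) / 2) powr (1 / d)"
    and out: "(p, R') \<in> sep_ann_out dst S (card S) d (exp 1) (2 * (4 * exp 1) powr d)"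
  shows "0 < R' \<and> \<delta> * real t \<le> R'"
proof -
  define n c where "n = card S" and "c = 2 * (4 * exp 1) powr d"
  have p: "p \<in> S" and R': "R' = sep_ann_R dst S n c p"
    using out unfolding sep_ann_out_def n_def c_def by auto
  have "1 \<le> (4 * exp 1) powr d"
    using \<open>0 < d\<close> exp_ge_add_one_self[of 1] by (intro ge_one_powr_ge_zero) auto
  then have "1 \<le> c"
    unfolding c_def by simp
  have "c < 2 * (16 * exp 1) powr d"
    unfolding c_def using \<open>0 < d\<close> by (simp add: powr_less_mono2)
  then have n_over_c: "1 < real n / c" "real n / c \<le> real (card S)"
    using large \<open>1 \<le> c\<close> unfolding n_def by (simp_all add: field_simps)
  then have R'_pos: "0 < R'" and R'_card: "real n / c \<le> real (card (mball dst S p R'))"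
    using sep_ann_R_pos_card_mball[OF finite_subset[OF assms(3,1)] metric_on_subset[OF assms(2,3)] p]
    unfolding R' by auto
  have "real n / c \<le> max 1 ((4 * R' / \<delta>) powr d)"
    using R'_card card_separated_mball_le_powr[OF assms(1-3) _ R'_pos \<open>0 < \<delta>\<close> sep] p assms(3,4)
    by fastforce
  then have upper: "real n / c \<le> (4 * R' / \<delta>) powr d"
    using n_over_c(1) by (simp add: le_max_iff_disj)
  have "(16 * exp 1 * real t) powr d \<le> ((real n / 2) powr (1 / d)) powr d"
    using t \<open>0 < d\<close> unfolding n_def by (intro powr_mono2) (auto simp: field_simps)
  also have "\<dots> = real n / 2"
    using \<open>0 < d\<close> by (simp add: powr_powr)
  finally have "(4 * real t) powr d * (4 * exp 1) powr d \<le> real n / 2"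
    by (simp add: powr_mult[symmetric] mult_ac)
  then have lower: "(4 * real t) powr d \<le> real n / c"
    unfolding c_def by (simp add: field_simps)
  have "4 * real t \<le> 4 * R' / \<delta>"
    using upper lower powr_less_mono2[OF \<open>0 < d\<close>, of "4 * R' / \<delta>" "4 * real t"] R'_pos \<open>0 < \<delta>\<close>
    by fastforce
  then show ?thesis
    using R'_pos \<open>0 < \<delta>\<close> by (simp add: field_simps)
qed

lemma sparse_sep_ann_radius_lower_bound:
  assumes "finite P" "metric_on P dst" "S \<subseteq> P" "d = doubling_dim P dst" "0 < d" "0 < \<delta>"
    and "\<forall>x\<in>S. \<forall>y\<in>S. x \<noteq> y \<longrightarrow> \<delta> \<le> dst x y"
    and "2 * (16 * exp 1) powr d \<le> real (card S)"
    and "real t \<le> (1 / (16 * exp 1)) * (real (card S) / 2) powr (1 / d)"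
    and "(p, R) \<in> sparse_sep_ann_out dst S (card S) d t"
  shows "p \<in> S \<and> 1 \<le> t \<and> \<delta> * real t \<le> R"
proof -
  obtain R' i where out: "(p, R') \<in> sep_ann_out dst S (card S) d (exp 1) (2 * (4 * exp 1) powr d)"
    and i: "i \<in> {1..t}" and R: "R = (1 + 1 / real t) ^ (i - 1) * R'"
    using assms(10) unfolding sparse_sep_ann_out_def Let_def by blast
  have R'_pos: "0 < R'" and R'_bound: "\<delta> * real t \<le> R'"
    using sep_ann_radius_lower_bound[OF assms(1-9) out] by auto
  have "1 \<le> (1 + 1 / real t) ^ (i - 1)"
    by (rule one_le_power) simp
  then have "R' \<le> R"
    unfolding R using R'_pos by (simp add: mult_le_cancel_right1)
  then have "\<delta> * real t \<le> R"
    using R'_bound by linarith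
  moreover have "p \<in> S"
    using out unfolding sep_ann_out_def by simp
  ultimately show ?thesis
    using i by simp
qed

lemma close_pair_not_split_by_annulus:
  assumes "metric_on P dst" "S \<subseteq> P" "p \<in> P" "x \<in> S" "y \<in> S" "dst x y \<le> R' - R"
  shows "{x, y} \<subseteq> mball dst S p R \<union> annulus dst S p R R' \<or>
         {x, y} \<subseteq> annulus dst S p R R' \<union> (S - (mball dst S p R \<union> annulus dst S p R R'))"
proof -
  have "x \<in> P" "y \<in> P"
    using assms(2,4,5) by auto
  then have "dst p y \<le> dst p x + dst x y" "dst p x \<le> dst p y + dst x y"
    using assms(1,3) unfolding metric_on_def by (metis add.commute order_trans)+
  then show ?thesis
    using assms(4-6) unfolding mball_def annulus_def by auto
qed

lemma closest_pair_out_eq_cp_delta: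
  assumes "finite P" "metric_on P dst" "d = doubling_dim P dst"
    and "closest_pair_out dst d S \<delta>0" "S \<subseteq> P"
  shows "\<delta>0 = cp_delta dst S"
  using assms(4,5)
proof (induction rule: closest_pair_out.induct)
  case (base S)
  then show ?case
    by simp
next
  case (step S t p R S1 S2 S3 d' d'')
  have fin: "finite S"
    using step.prems assms(1) finite_subset by blast
  have sub: "S1 \<union> S2 \<subseteq> S" "S2 \<union> S3 \<subseteq> S"
    using step.hyps(4-6) by (auto simp: mball_def annulus_def)
  have IH: "d' = cp_delta dst (S1 \<union> S2)" "d'' = cp_delta dst (S2 \<union> S3)"
    using step.IH sub step.prems by auto
  have ge: "cp_delta dst S \<le> cp_delta dst (S1 \<union> S2)" "cp_delta dst S \<le> cp_delta dst (S2 \<union> S3)"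
    using cp_delta_antimono[OF fin] sub by auto
  have "cp_delta dst (S1 \<union> S2) = cp_delta dst S \<or> cp_delta dst (S2 \<union> S3) = cp_delta dst S"
  proof (cases "1 < card S")
    case False
    then show ?thesis
      using ge(1) unfolding cp_delta_def[of dst S] by simp
  next
    case True
    then obtain x y where xy: "x \<in> S" "y \<in> S" "x \<noteq> y" "0 < dst x y"
        "cp_delta dst S = ereal (dst x y)"
      and sep: "\<forall>a\<in>S. \<forall>b\<in>S. a \<noteq> b \<longrightarrow> dst x y \<le> dst a b"
      by (rule closest_pair_exists[OF fin metric_on_subset[OF assms(2) step.prems]])
    have "1 < card P"
      using xy(1-3) step.prems assms(1) one_less_card_iff_pair by blast
    then have "0 < d"
      using doubling_dim_pos[OF assms(1,2)] assms(3) by simp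
    have "real t \<le> (1 / (16 * exp 1)) * (real (card S) / 2) powr (1 / d)"
      unfolding step.hyps(2) by (rule of_nat_floor) simp
    then have "p \<in> S \<and> 1 \<le> t \<and> dst x y * real t \<le> R"
      using sparse_sep_ann_radius_lower_bound[OF assms(1,2) step.prems assms(3) \<open>0 < d\<close> xy(4) sep]
        step.hyps(1,3) by simp
    \<comment> \<open>the annulus \<open>S2\<close> has width \<open>R / t \<ge> \<delta>(S)\<close>, so it separates no closest pair\<close>
    then have "p \<in> P" "dst x y \<le> (1 + 1 / real t) * R - R"
      using step.prems by (auto simp: field_simps)
    then have "{x, y} \<subseteq> S1 \<union> S2 \<or> {x, y} \<subseteq> S2 \<union> S3"
      using close_pair_not_split_by_annulus[OF assms(2) step.prems _ xy(1,2)] step.hyps(4-6) by simp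
    then show ?thesis
      using cp_delta_eq_if_contains_closest_pair[OF fin _ _ _ xy(3,5)] sub by blast
  qed
  then show ?case
    using IH ge by (auto simp: min_def)
qed

theorem lemma5:
  fixes P :: "'a set" and dst :: "'a \<Rightarrow> 'a \<Rightarrow> real" and S :: "'a set"
    and d :: real and \<delta>0 :: ereal
  assumes "finite P"
    and "metric_on P dst"
    and "d = doubling_dim P dst"
    and "S \<subseteq> P"
    and "card S \<ge> 2"
    and "closest_pair_out dst d S \<delta>0"
  shows "\<delta>0 \<ge> cp_delta dst P \<and> (cp_delta dst S = cp_delta dst P \<longrightarrow> \<delta>0 = cp_delta dst P)"
proof -
  have "\<delta>0 = cp_delta dst S"
    using closest_pair_out_eq_cp_delta[OF assms(1-3,6,4)] .
  moreover have "cp_delta dst P \<le> cp_delta dst S"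
    using cp_delta_antimono[OF assms(1,4)] .
  ultimately show ?thesis
    by simp
qed

end
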